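(* Let $N_\mathrm{T},N_\mathrm{R},N_\mathrm{S}$ be positive integers, let $\mathbf{H}_\mathrm{D}\in\mathbb{C}^{N_\mathrm{R}\times N_\mathrm{T}}$, $\mathbf{H}_\mathrm{B}\in\mathbb{C}^{N_\mathrm{R}\times N_\mathrm{S}}$, $\mathbf{H}_\mathrm{F}\in\mathbb{C}^{N_\mathrm{S}\times N_\mathrm{T}}$, and for a scattering matrix $\mathbf{\Theta}\in\mathbb{C}^{N_\mathrm{S}\times N_\mathrm{S}}$ let $\mathbf{H}(\mathbf{\Theta})=\mathbf{H}_\mathrm{D}+\mathbf{H}_\mathrm{B}\mathbf{\Theta}\mathbf{H}_\mathrm{F}$. A BD-RIS may achieve a larger or a smaller MIMO DoF than a D-RIS. Precisely: (i) there exist $N_\mathrm{T},N_\mathrm{R},N_\mathrm{S}$ and channels $\mathbf{H}_\mathrm{D},\mathbf{H}_\mathrm{B},\mathbf{H}_\mathrm{F}$ such that $\max_{\mathbf{\Theta}\text{ BD}}\mathrm{DoF}(\mathbf{H}(\mathbf{\Theta}))>\max_{\mathbf{\Theta}\text{ D}}\mathrm{DoF}(\mathbf{H}(\mathbf{\Theta}))$; and (ii) there exist $N_\mathrm{T},N_\mathrm{R},N_\mathrm{S}$ and channels such that $\min_{\mathbf{\Theta}\text{ BD}}\mathrm{DoF}(\mathbf{H}(\mathbf{\Theta}))<\min_{\mathbf{\Theta}\text{ D}}\mathrm{DoF}(\mathbf{H}(\mathbf{\Theta}))$, where "BD" ranges over all unitary $\mathbf{\Theta}\in\mathbb{U}^{N_\mathrm{S}\times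 N_\mathrm{S}}$ (fully-connected BD-RIS) and "D" over all diagonal $\mathbf{\Theta}=\mathrm{diag}(e^{\jmath\theta_1},\ldots,e^{\jmath\theta_{N_\mathrm{S}}})$, $\theta_i\in\mathbb{R}$ (D-RIS).
   Context: $\mathbb{U}^{n\times n}$ denotes the set of $n\times n$ complex unitary matrices. The degrees of freedom of a matrix $\mathbf{H}$ are $\mathrm{DoF}(\mathbf{H})=\lim_{\rho\to\infty}\frac{\log\det(\mathbf{I}+\rho\mathbf{H}\mathbf{H}^\mathsf{H})}{\log\rho}$ (the number of parallel streams supported at asymptotically high SNR $\rho$). A diagonal RIS (D-RIS) has diagonal scattering matrix with unit-modulus diagonal entries; a fully-connected beyond-diagonal RIS (BD-RIS) has an arbitrary unitary scattering matrix. *)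

theory Defs
  imports Complex_Main "Jordan_Normal_Form.Determinant"
begin

definition herm :: "complex mat \<Rightarrow> complex mat" where
  "herm A = mat (dim_col A) (dim_row A) (\<lambda>(i,j). cnj (A $$ (j,i)))"

text \<open>Degrees of freedom: lim_{rho -> oo} log det(I + rho H H^H) / log rho.
  The determinant is real and positive (Hermitian positive definite), we take its real part.\<close>
definition DoF :: "complex mat \<Rightarrow> real" where
  "DoF H = Lim at_top
     (\<lambda>\<rho>::real. ln (Re (det (1\<^sub>m (dim_row H) + complex_of_real \<rho> \<cdot>\<^sub>m (H * herm H)))) / ln \<rho>)"

definition unitary_mats :: "nat \<Rightarrow> complex mat set" where
  "unitary_mats n = {U. U \<in> carrier_mat n n \<and> U * herm U = 1\<^sub>m n}"

definition diag_ris_mats :: "nat \<Rightarrow> complex mat set" where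
  "diag_ris_mats n = {mat_diag n (\<lambda>i. cis (\<theta> i)) | \<theta>. \<theta> \<in> (UNIV :: (nat \<Rightarrow> real) set)}"

definition ris_channel :: "complex mat \<Rightarrow> complex mat \<Rightarrow> complex mat \<Rightarrow> complex mat \<Rightarrow> complex mat" where
  "ris_channel HD HB HF \<Theta> = HD + HB * \<Theta> * HF"

end

theory Submission
  imports Defs "HOL-Real_Asymp.Real_Asymp"
begin

text \<open>
  Single-antenna links with a two-element surface suffice for both claims. If the direct link
  is absent and the surface is fed and observed through different elements, the channel is the
  off-diagonal entry of \<open>\<Theta>\<close>: a diagonal RIS kills it (DoF 0), a swap permutation makes it 1
  (DoF 1). If instead the surface is fed and observed through the same element and the direct
  channel has modulus \<open>3/5 < 1\<close>, the channel \<open>3/5 + \<Theta>\<^sub>0\<^sub>0\<close> never vanishes for a unimodular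
  \<open>\<Theta>\<^sub>0\<^sub>0\<close> (DoF 1), whereas the unitary reflection with \<open>\<Theta>\<^sub>0\<^sub>0 = -3/5\<close> cancels it (DoF 0).
\<close>

lemma DoF_scalar:
  assumes "H \<in> carrier_mat 1 1"
  shows "DoF H = (if H $$ (0,0) = 0 then 0 else 1)"
proof -
  define a where "a = (cmod (H $$ (0,0)))\<^sup>2"
  have det: "Re (det (1\<^sub>m (dim_row H) + complex_of_real \<rho> \<cdot>\<^sub>m (H * herm H))) = 1 + \<rho> * a"
    for \<rho>
  proof -
    have "1\<^sub>m (dim_row H) + complex_of_real \<rho> \<cdot>\<^sub>m (H * herm H) \<in> carrier_mat 1 1"
      using assms by (auto simp: herm_def)
    then have "det (1\<^sub>m (dim_row H) + complex_of_real \<rho> \<cdot>\<^sub>m (H * herm H))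
        = 1 + \<rho> * (H $$ (0,0) * cnj (H $$ (0,0)))"
      using assms by (subst det_single) (auto simp: herm_def scalar_prod_def)
    then show ?thesis
      by (simp add: a_def complex_mult_cnj cmod_power2)
  qed
  show ?thesis
  proof (cases "H $$ (0,0) = 0")
    case True
    then show ?thesis
      unfolding DoF_def det
      by (simp add: a_def tendsto_Lim[OF trivial_limit_at_top_linorder tendsto_const])
  next
    case False
    then have "a > 0"
      by (simp add: a_def)
    then have "((\<lambda>\<rho>. ln (1 + \<rho> * a) / ln \<rho>) \<longlongrightarrow> 1) at_top"
      by real_asymp
    then show ?thesis
      unfolding DoF_def det using False tendsto_Lim[OF trivial_limit_at_top_linorder] by simp
  qed
qed

lemma DoF_scalar_bounds:
  assumes "H \<in> carrier_mat 1 1"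
  shows "0 \<le> DoF H" and "DoF H \<le> 1"
  using DoF_scalar[OF assms] by auto

lemma ris_channel_unit_selectors:
  assumes "HD \<in> carrier_mat 1 1" "\<Theta> \<in> carrier_mat n n" "i < n" "j < n"
  defines "H \<equiv> ris_channel HD (mat_of_row (unit_vec n i)) (mat_of_row (unit_vec n j))\<^sup>T \<Theta>"
  shows "H \<in> carrier_mat 1 1" and "H $$ (0,0) = HD $$ (0,0) + \<Theta> $$ (i,j)"
proof -
  have row: "(mat_of_row (unit_vec n i) * \<Theta>) $$ (0,k) = \<Theta> $$ (i,k)" if "k < n" for k
    using assms(2,3) that by simp
  have "(mat_of_row (unit_vec n i) * \<Theta> * (mat_of_row (unit_vec n j))\<^sup>T) $$ (0,0)
      = row (mat_of_row (unit_vec n i) * \<Theta>) 0 \<bullet> unit_vec n j"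
    using assms(2) by simp
  also have "\<dots> = \<Theta> $$ (i,j)"
    using assms(2,4) row by simp
  finally show "H $$ (0,0) = HD $$ (0,0) + \<Theta> $$ (i,j)"
    using assms(1,2) by (simp add: H_def ris_channel_def mat_of_row_def)
  have "mat_of_row (unit_vec n i) * \<Theta> * (mat_of_row (unit_vec n j))\<^sup>T \<in> carrier_mat 1 1"
    using assms(2) by (intro mult_carrier_mat[of _ _ n]) auto
  with assms(1) show "H \<in> carrier_mat 1 1"
    by (simp add: H_def ris_channel_def)
qed

lemma diag_ris_mats_carrier: "\<Theta> \<in> diag_ris_mats n \<Longrightarrow> \<Theta> \<in> carrier_mat n n"
  by (auto simp: diag_ris_mats_def)

lemma diag_ris_mats_nonempty: "diag_ris_mats n \<noteq> {}"
  by (auto simp: diag_ris_mats_def)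

lemma diag_ris_mats_off_diagonal:
  "\<Theta> \<in> diag_ris_mats n \<Longrightarrow> i < n \<Longrightarrow> j < n \<Longrightarrow> i \<noteq> j \<Longrightarrow> \<Theta> $$ (i,j) = 0"
  by (auto simp: diag_ris_mats_def mat_diag_def)

lemma diag_ris_mats_diagonal_norm:
  "\<Theta> \<in> diag_ris_mats n \<Longrightarrow> i < n \<Longrightarrow> cmod (\<Theta> $$ (i,i)) = 1"
  by (auto simp: diag_ris_mats_def mat_diag_def)

lemma unitary_mats_carrier: "\<Theta> \<in> unitary_mats n \<Longrightarrow> \<Theta> \<in> carrier_mat n n"
  by (auto simp: unitary_mats_def)

definition reflection_mat :: "real \<Rightarrow> real \<Rightarrow> complex mat" where
  "reflection_mat c s = mat 2 2 (\<lambda>(i,j). if i = j then (if i = 0 then - c else c) else s)"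

lemma reflection_mat_unitary:
  assumes "c\<^sup>2 + s\<^sup>2 = 1"
  shows "reflection_mat c s \<in> unitary_mats 2"
proof -
  have norm: "complex_of_real c * c + complex_of_real s * s = 1" "complex_of_real s * s + c * c = 1"
    using assms by (metis add.commute of_real_add of_real_mult of_real_1 power2_eq_square)+
  have "reflection_mat c s * herm (reflection_mat c s) = 1\<^sub>m 2"
  proof (rule eq_matI)
    fix i j assume "i < dim_row (1\<^sub>m 2 :: complex mat)" "j < dim_col (1\<^sub>m 2 :: complex mat)"
    then have "i \<in> {0,1}" "j \<in> {0,1}" by auto
    then show "(reflection_mat c s * herm (reflection_mat c s)) $$ (i, j) = 1\<^sub>m 2 $$ (i, j)"
      using norm by (auto simp: reflection_mat_def herm_def scalar_prod_def numeral_2_eq_2 mult.commute)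
  qed (simp_all add: reflection_mat_def herm_def)
  then show ?thesis
    by (simp add: unitary_mats_def reflection_mat_def)
qed

lemma bd_ris_max_DoF_exceeds_d_ris:
  defines "H \<equiv> ris_channel (0\<^sub>m 1 1) (mat_of_row (unit_vec 2 0)) (mat_of_row (unit_vec 2 1))\<^sup>T"
  shows "(SUP \<Theta>\<in>diag_ris_mats 2. DoF (H \<Theta>)) < (SUP \<Theta>\<in>unitary_mats 2. DoF (H \<Theta>))"
proof -
  have H: "H \<Theta> \<in> carrier_mat 1 1" "H \<Theta> $$ (0,0) = \<Theta> $$ (0,1)" if "\<Theta> \<in> carrier_mat 2 2" for \<Theta>
    using ris_channel_unit_selectors[OF _ that, of "0\<^sub>m 1 1" 0 1] by (simp_all add: H_def)
  have "DoF (H \<Theta>) = 0" if "\<Theta> \<in> diag_ris_mats 2" for \<Theta>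
    using H[OF diag_ris_mats_carrier[OF that]] diag_ris_mats_off_diagonal[OF that, of 0 1]
    by (simp add: DoF_scalar)
  then have D: "(SUP \<Theta>\<in>diag_ris_mats 2. DoF (H \<Theta>)) = 0"
    using diag_ris_mats_nonempty by simp
  have swap: "reflection_mat 0 1 \<in> unitary_mats 2"
    by (simp add: reflection_mat_unitary)
  have "DoF (H (reflection_mat 0 1)) = 1"
    using H[OF unitary_mats_carrier[OF swap]] by (simp add: DoF_scalar reflection_mat_def)
  moreover have "bdd_above ((\<lambda>\<Theta>. DoF (H \<Theta>)) ` unitary_mats 2)"
    using H(1)[OF unitary_mats_carrier] DoF_scalar_bounds(2) by (intro bdd_aboveI) blast
  ultimately have "1 \<le> (SUP \<Theta>\<in>unitary_mats 2. DoF (H \<Theta>))"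
    using cSUP_upper[OF swap] by metis
  with D show ?thesis
    by simp
qed

lemma bd_ris_min_DoF_below_d_ris:
  defines "H \<equiv> ris_channel (mat 1 1 (\<lambda>_. 3/5)) (mat_of_row (unit_vec 2 0)) (mat_of_row (unit_vec 2 0))\<^sup>T"
  shows "(INF \<Theta>\<in>unitary_mats 2. DoF (H \<Theta>)) < (INF \<Theta>\<in>diag_ris_mats 2. DoF (H \<Theta>))"
proof -
  have H: "H \<Theta> \<in> carrier_mat 1 1" "H \<Theta> $$ (0,0) = 3/5 + \<Theta> $$ (0,0)" if "\<Theta> \<in> carrier_mat 2 2" for \<Theta>
    using ris_channel_unit_selectors[OF _ that, of "mat 1 1 (\<lambda>_. 3/5)" 0 0] by (simp_all add: H_def)
  have "DoF (H \<Theta>) = 1" if "\<Theta> \<in> diag_ris_mats 2" for \<Theta>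
  proof -
    have "3/5 + \<Theta> $$ (0,0) \<noteq> 0"
    proof
      assume "3/5 + \<Theta> $$ (0,0) = 0"
      then have "\<Theta> $$ (0,0) = - 3/5"
        by (simp add: add_eq_0_iff)
      with diag_ris_mats_diagonal_norm[OF that, of 0] show False
        by simp
    qed
    then show ?thesis
      using H[OF diag_ris_mats_carrier[OF that]] by (simp add: DoF_scalar)
  qed
  then have D: "(INF \<Theta>\<in>diag_ris_mats 2. DoF (H \<Theta>)) = 1"
    using diag_ris_mats_nonempty by simp
  have cancel: "reflection_mat (3/5) (4/5) \<in> unitary_mats 2"
    by (simp add: reflection_mat_unitary power2_eq_square)
  have "DoF (H (reflection_mat (3/5) (4/5))) = 0"
    using H[OF unitary_mats_carrier[OF cancel]] by (simp add: DoF_scalar reflection_mat_def)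
  moreover have "bdd_below ((\<lambda>\<Theta>. DoF (H \<Theta>)) ` unitary_mats 2)"
    using H(1)[OF unitary_mats_carrier] DoF_scalar_bounds(1) by (intro bdd_belowI) blast
  ultimately have "(INF \<Theta>\<in>unitary_mats 2. DoF (H \<Theta>)) \<le> 0"
    using cINF_lower[OF _ cancel] by metis
  with D show ?thesis
    by simp
qed

theorem proposition1:
  shows "(\<exists>nT nR nS HD HB HF.
            0 < nT \<and> 0 < nR \<and> 0 < nS \<and>
            HD \<in> carrier_mat nR nT \<and> HB \<in> carrier_mat nR nS \<and> HF \<in> carrier_mat nS nT \<and>
            (SUP \<Theta>\<in>unitary_mats nS. DoF (ris_channel HD HB HF \<Theta>))
              > (SUP \<Theta>\<in>diag_ris_mats nS. DoF (ris_channel HD HB HF \<Theta>)))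
       \<and> (\<exists>nT nR nS HD HB HF.
            0 < nT \<and> 0 < nR \<and> 0 < nS \<and>
            HD \<in> carrier_mat nR nT \<and> HB \<in> carrier_mat nR nS \<and> HF \<in> carrier_mat nS nT \<and>
            (INF \<Theta>\<in>unitary_mats nS. DoF (ris_channel HD HB HF \<Theta>))
              < (INF \<Theta>\<in>diag_ris_mats nS. DoF (ris_channel HD HB HF \<Theta>)))"
proof (intro conjI exI)
  let ?HB = "mat_of_row (unit_vec 2 0) :: complex mat"
  show "(SUP \<Theta>\<in>unitary_mats 2. DoF (ris_channel (0\<^sub>m 1 1) ?HB (mat_of_row (unit_vec 2 1))\<^sup>T \<Theta>))
      > (SUP \<Theta>\<in>diag_ris_mats 2. DoF (ris_channel (0\<^sub>m 1 1) ?HB (mat_of_row (unit_vec 2 1))\<^sup>T \<Theta>))"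
    using bd_ris_max_DoF_exceeds_d_ris by simp
  show "(INF \<Theta>\<in>unitary_mats 2. DoF (ris_channel (mat 1 1 (\<lambda>_. 3/5)) ?HB (mat_of_row (unit_vec 2 0))\<^sup>T \<Theta>))
      < (INF \<Theta>\<in>diag_ris_mats 2. DoF (ris_channel (mat 1 1 (\<lambda>_. 3/5)) ?HB (mat_of_row (unit_vec 2 0))\<^sup>T \<Theta>))"
    using bd_ris_min_DoF_below_d_ris by simp
qed auto

end
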